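(* Fix a device $k$ and a training round $t$, with dropout rate $\gamma_{k,t}\in[0,1)$ and regularization coefficient $\lambda_t>0$. Let $\mathcal D_k$ be the local dataset of device $k$, and for $j$ drawn uniformly from $\{1,\dots,|\mathcal D_k|\}$ let $\mathcal D_k^j=\mathcal D_k\setminus\{\boldsymbol x_j\}$. Write $\hat{\boldsymbol\theta}=\boldsymbol\theta_{\ell_{k,\lambda_t}}(\mathcal D_k)$ and $\hat{\boldsymbol\theta}^j=\boldsymbol\theta_{\ell_{k,\lambda_t}}(\mathcal D_k^j)$. Assume: (i) the loss is $\eta$-Lipschitz in the parameters, i.e. $\theta\mapsto \ell_{k,\lambda_t}(\theta,\boldsymbol x)$ is $\eta$-Lipschitz for every sample $\boldsymbol x$; (ii) $\hat{\boldsymbol\theta}^j$ is close to $\hat{\boldsymbol\theta}$, in the sense that the second-order Taylor expansion of $\ell_{k,\lambda_t}(\cdot;\mathcal D_k)$ around its minimizer $\hat{\boldsymbol\theta}$ (where its gradient vanishes) is exact at $\hat{\boldsymbol\theta}^j$; (iii) the Hessian $\nabla^2\ell_{k,\lambda_t}(\hat{\boldsymbol\theta};\mathcal D_k)$ is positive semidefinite, and the Hessian of the unregularized empirical loss at $\hat{\boldsymbol\theta}$ has eigendecomposition $\nabla^2\ell_k(\hat{\boldsymbol\theta})=U_{k,t}\,\mathrm{diag}(\Lambda_{k,t})\,U_{k,t}^{-1}$ with $\Lambda_{k,t,\min}=\min\{\Lambda_{k,t,1},\dots,\Lambda_{k,t,m}\}$. Then $$\mathbb E_{\mathcal D_k,\,j}\Big|\ell_{k,\lambda_t}(\hat{\boldsymbol\theta}^j,\boldsymbol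 x_j)-\ell_{k,\lambda_t}(\hat{\boldsymbol\theta},\boldsymbol x_j)\Big|\le \frac{2\eta^2}{\big(\Lambda_{k,t,\min}+2\lambda_t(2\gamma_{k,t}-\gamma_{k,t}^2)\big)\,|\mathcal D_k|}.$$
   Context: Parameters $\boldsymbol\theta$ of a model are perturbations of fixed pre-trained parameters $\boldsymbol\theta_0$; $\ell(\boldsymbol\theta,\boldsymbol x)$ is the per-sample loss, and the local dataset $\mathcal D_k$ consists of i.i.d. samples (the outer expectation is over the draw of $\mathcal D_k$). The dropout-induced sparsity regularization is $\mathbb E_{\boldsymbol d}\|\boldsymbol d\odot(\boldsymbol\theta-\boldsymbol\theta_0)\|_2^2$ where $\boldsymbol d$ has i.i.d. Bernoulli entries equal to $1$ with probability $2\gamma_{k,t}-\gamma_{k,t}^2$; this equals $(2\gamma_{k,t}-\gamma_{k,t}^2)\|\boldsymbol\theta-\boldsymbol\theta_0\|_2^2$. The regularized per-sample loss is $\ell_{k,\lambda_t}(\boldsymbol\theta,\boldsymbol x)=\ell(\boldsymbol\theta,\boldsymbol x)+\lambda_t(2\gamma_{k,t}-\gamma_{k,t}^2)\|\boldsymbol\theta-\boldsymbol\theta_0\|_2^2$, and for a finite dataset $S$ the regularized empirical loss is $\ell_{k,\lambda_t}(\boldsymbol\theta;S)=\frac1{|S|}\sum_{\boldsymbol x\in S}\ell(\boldsymbol\theta,\boldsymbol x)+\lambda_t(2\gamma_{k,t}-\gamma_{k,t}^2)\|\boldsymbol\theta-\boldsymbol\theta_0\|_2^2$, with unregularized part $\ell_k(\boldsymbol\theta)=\frac1{|\mathcal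 D_k|}\sum_{\boldsymbol x\in\mathcal D_k}\ell(\boldsymbol\theta,\boldsymbol x)$. $\boldsymbol\theta_{\ell_{k,\lambda_t}}(S)$ denotes the (local) minimizer of $\ell_{k,\lambda_t}(\cdot;S)$. *)

theory Defs
  imports "HOL-Analysis.Analysis" "HOL-Probability.Probability"
begin

definition dropout_coef :: "real \<Rightarrow> real" where
  "dropout_coef \<gamma> = 2 * \<gamma> - \<gamma>^2"

definition reg_loss ::
  "('p::real_normed_vector \<Rightarrow> 'x \<Rightarrow> real) \<Rightarrow> real \<Rightarrow> real \<Rightarrow> 'p \<Rightarrow> 'p \<Rightarrow> 'x \<Rightarrow> real" where
  "reg_loss loss lam \<gamma> \<theta>0 \<theta> x = loss \<theta> x + lam * dropout_coef \<gamma> * (norm (\<theta> - \<theta>0))^2"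

definition emp_loss :: "('p \<Rightarrow> 'x \<Rightarrow> real) \<Rightarrow> (nat \<Rightarrow> 'x) \<Rightarrow> nat set \<Rightarrow> 'p \<Rightarrow> real" where
  "emp_loss loss D I \<theta> = (\<Sum>i\<in>I. loss \<theta> (D i)) / real (card I)"

definition emp_reg_loss ::
  "('p::real_normed_vector \<Rightarrow> 'x \<Rightarrow> real) \<Rightarrow> real \<Rightarrow> real \<Rightarrow> 'p \<Rightarrow> (nat \<Rightarrow> 'x) \<Rightarrow> nat set \<Rightarrow> 'p \<Rightarrow> real" where
  "emp_reg_loss loss lam \<gamma> \<theta>0 D I \<theta> =
     emp_loss loss D I \<theta> + lam * dropout_coef \<gamma> * (norm (\<theta> - \<theta>0))^2"

definition has_hessian :: "(real^'m \<Rightarrow> real) \<Rightarrow> real^'m^'m \<Rightarrow> real^'m \<Rightarrow> bool" where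
  "has_hessian f H a \<longleftrightarrow>
     (\<exists>g S. open S \<and> a \<in> S \<and> (\<forall>y\<in>S. (f has_derivative (\<lambda>h. g y \<bullet> h)) (at y)) \<and>
            (g has_derivative (\<lambda>h. H *v h)) (at a))"

definition diag_mat :: "real^'m \<Rightarrow> real^'m^'m" where
  "diag_mat v = (\<chi> i j. if i = j then v $ i else 0)"

end

theory Submission
  imports Defs
begin

(* Write F for the regularized empirical loss on all n samples, F_j for the one without
   sample j, r_j for the regularized loss of sample j, and d = theta_j - theta for the two
   minimizers. Since n F = (n - 1) F_j + r_j and theta_j minimizes F_j,
   n (F theta_j - F theta) <= r_j theta_j - r_j theta <= eta |d|.
   By the exact Taylor expansion the left side equals (n/2) d . Hess F d, and
   Hess F = Hess l_k + 2 lambda c I with c = 2 gamma - gamma^2. Being a Hessian,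
   Hess l_k is symmetric (Schwarz), so its eigendecomposition bounds its quadratic form
   below by Lambda_min |d|^2. Thus (n/2) (Lambda_min + 2 lambda c) |d|^2 <= eta |d|, whence
   |d| <= 2 eta / (n (Lambda_min + 2 lambda c)) and the change of r_j is at most eta |d|,
   for every data set and every j. *)

section \<open>Symmetry of the Hessian\<close>

lemma second_difference_mvt:
  fixes f :: "'a::real_inner \<Rightarrow> real" and g :: "'a \<Rightarrow> 'a"
  assumes grad: "\<forall>y\<in>S. (f has_derivative (\<lambda>h. g y \<bullet> h)) (at y)"
    and t: "0 < t"
    and seg: "\<And>s. 0 \<le> s \<Longrightarrow> s \<le> t \<Longrightarrow> a + s *\<^sub>R u \<in> S \<and> a + s *\<^sub>R u + t *\<^sub>R v \<in> S"
  shows "\<exists>z. 0 < z \<and> z < t \<and>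
    f (a + t *\<^sub>R u + t *\<^sub>R v) - f (a + t *\<^sub>R u) - f (a + t *\<^sub>R v) + f a
      = t * ((g (a + z *\<^sub>R u + t *\<^sub>R v) - g (a + z *\<^sub>R u)) \<bullet> u)"
proof -
  define \<phi> where "\<phi> s = f (a + s *\<^sub>R u + t *\<^sub>R v) - f (a + s *\<^sub>R u)" for s
  define \<phi>' where "\<phi>' s = (g (a + s *\<^sub>R u + t *\<^sub>R v) - g (a + s *\<^sub>R u)) \<bullet> u" for s
  have line: "((\<lambda>s. f (a + s *\<^sub>R u + w)) has_derivative (\<lambda>h. g (a + s *\<^sub>R u + w) \<bullet> (h *\<^sub>R u))) (at s)"
    if "a + s *\<^sub>R u + w \<in> S" for s w
  proof -
    have "((\<lambda>s. a + s *\<^sub>R u + w) has_derivative (\<lambda>h. h *\<^sub>R u)) (at s)"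
      by (auto intro!: derivative_eq_intros)
    from has_derivative_compose[OF this, of f] show ?thesis
      using grad that by blast
  qed
  have "(\<phi> has_real_derivative \<phi>' s) (at s)" if "0 \<le> s" "s \<le> t" for s
  proof -
    have "(\<phi> has_derivative (\<lambda>h. g (a + s *\<^sub>R u + t *\<^sub>R v) \<bullet> (h *\<^sub>R u)
                                 - g (a + s *\<^sub>R u) \<bullet> (h *\<^sub>R u))) (at s)"
      unfolding \<phi>_def using seg[OF that] line[of s "t *\<^sub>R v"] line[of s 0]
      by (intro has_derivative_diff) auto
    moreover have "(\<lambda>h. g (a + s *\<^sub>R u + t *\<^sub>R v) \<bullet> (h *\<^sub>R u) - g (a + s *\<^sub>R u) \<bullet> (h *\<^sub>R u))
        = (*) (\<phi>' s)"
      by (auto simp: \<phi>'_def inner_diff_left algebra_simps)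
    ultimately show ?thesis
      by (simp add: has_field_derivative_def)
  qed
  then obtain z where "0 < z" "z < t" "\<phi> t - \<phi> 0 = (t - 0) * \<phi>' z"
    using MVT2[OF t] by blast
  then show ?thesis
    by (auto simp: \<phi>_def \<phi>'_def)
qed

lemma second_difference_bound:
  fixes f :: "'a::real_inner \<Rightarrow> real" and g :: "'a \<Rightarrow> 'a"
  assumes grad: "\<forall>y\<in>S. (f has_derivative (\<lambda>h. g y \<bullet> h)) (at y)"
    and ball: "ball a \<rho> \<subseteq> S"
    and L: "linear L"
    and approx: "\<forall>y\<in>ball a \<rho>. norm (g y - g a - L (y - a)) \<le> \<epsilon> * norm (y - a)"
    and \<epsilon>: "0 \<le> \<epsilon>"
    and t: "0 < t" "t * (norm u + norm v) < \<rho>"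
  shows "\<bar>f (a + t *\<^sub>R u + t *\<^sub>R v) - f (a + t *\<^sub>R u) - f (a + t *\<^sub>R v) + f a - t\<^sup>2 * (L v \<bullet> u)\<bar>
    \<le> 2 * \<epsilon> * (norm u + norm v)\<^sup>2 * t\<^sup>2"
proof -
  define K where "K = norm u + norm v"
  define E where "E w = g (a + w) - g a - L w" for w
  have near: "a + w \<in> ball a \<rho>" if "norm w \<le> t * K" for w
    using that t by (simp add: K_def dist_norm)
  have E: "norm (E w) \<le> \<epsilon> * (t * K)" if "norm w \<le> t * K" for w
  proof -
    have "norm (E w) \<le> \<epsilon> * norm w"
      using approx[rule_format, OF near[OF that]] by (simp add: E_def)
    also have "\<dots> \<le> \<epsilon> * (t * K)"
      using that \<epsilon> by (rule mult_left_mono)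
    finally show ?thesis .
  qed
  have short: "norm (s *\<^sub>R u) \<le> t * K" "norm (s *\<^sub>R u + t *\<^sub>R v) \<le> t * K"
    if "0 \<le> s" "s \<le> t" for s
  proof -
    have su: "norm (s *\<^sub>R u) \<le> t * norm u"
      using that by (simp add: mult_right_mono)
    moreover have "0 \<le> t * norm v"
      using t by simp
    ultimately show "norm (s *\<^sub>R u) \<le> t * K"
      by (simp add: K_def distrib_left)
    have "norm (s *\<^sub>R u + t *\<^sub>R v) \<le> norm (s *\<^sub>R u) + t * norm v"
      using t norm_triangle_ineq[of "s *\<^sub>R u" "t *\<^sub>R v"] by simp
    then show "norm (s *\<^sub>R u + t *\<^sub>R v) \<le> t * K"
      using su by (simp add: K_def distrib_left)
  qed
  have seg: "a + s *\<^sub>R u \<in> S \<and> a + s *\<^sub>R u + t *\<^sub>R v \<in> S" if "0 \<le> s" "s \<le> t" for s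
    using near[OF short(1)[OF that]] near[OF short(2)[OF that]] ball by (auto simp: add.assoc)
  obtain z where z: "0 < z" "z < t" and mvt:
    "f (a + t *\<^sub>R u + t *\<^sub>R v) - f (a + t *\<^sub>R u) - f (a + t *\<^sub>R v) + f a
      = t * ((g (a + z *\<^sub>R u + t *\<^sub>R v) - g (a + z *\<^sub>R u)) \<bullet> u)"
    using second_difference_mvt[OF grad t(1) seg] by blast
  define w\<^sub>1 w\<^sub>2 where "w\<^sub>1 = z *\<^sub>R u + t *\<^sub>R v" and "w\<^sub>2 = z *\<^sub>R u"
  have "g (a + z *\<^sub>R u + t *\<^sub>R v) - g (a + z *\<^sub>R u) = E w\<^sub>1 - E w\<^sub>2 + t *\<^sub>R L v"
    using L by (simp add: E_def w\<^sub>1_def w\<^sub>2_def add.assoc linear_add linear_scale)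
  then have increment: "(g (a + z *\<^sub>R u + t *\<^sub>R v) - g (a + z *\<^sub>R u)) \<bullet> u
      = (E w\<^sub>1 - E w\<^sub>2) \<bullet> u + t * (L v \<bullet> u)"
    by (simp add: inner_add_left)
  have "f (a + t *\<^sub>R u + t *\<^sub>R v) - f (a + t *\<^sub>R u) - f (a + t *\<^sub>R v) + f a - t\<^sup>2 * (L v \<bullet> u)
      = t * ((E w\<^sub>1 - E w\<^sub>2) \<bullet> u)"
    by (simp only: mvt increment) (simp add: power2_eq_square algebra_simps)
  also have "\<bar>\<dots>\<bar> \<le> t * (norm (E w\<^sub>1 - E w\<^sub>2) * norm u)"
    using t Cauchy_Schwarz_ineq2[of "E w\<^sub>1 - E w\<^sub>2" u] by (simp add: abs_mult)
  also have "\<dots> \<le> t * ((norm (E w\<^sub>1) + norm (E w\<^sub>2)) * K)"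
    using t norm_triangle_ineq4[of "E w\<^sub>1" "E w\<^sub>2"]
    by (intro mult_left_mono mult_mono) (auto simp: K_def)
  also have "\<dots> \<le> t * ((\<epsilon> * (t * K) + \<epsilon> * (t * K)) * K)"
    using t z E short unfolding w\<^sub>1_def w\<^sub>2_def
    by (intro mult_left_mono mult_right_mono add_mono) (auto simp: K_def)
  also have "\<dots> = 2 * \<epsilon> * K\<^sup>2 * t\<^sup>2"
    by (simp add: power2_eq_square algebra_simps)
  finally show ?thesis
    unfolding K_def .
qed

lemma second_difference_tendsto:
  fixes f :: "'a::real_inner \<Rightarrow> real" and g :: "'a \<Rightarrow> 'a"
  assumes S: "open S" "a \<in> S"
    and grad: "\<forall>y\<in>S. (f has_derivative (\<lambda>h. g y \<bullet> h)) (at y)"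
    and hess: "(g has_derivative L) (at a)"
  shows "((\<lambda>t. (f (a + t *\<^sub>R u + t *\<^sub>R v) - f (a + t *\<^sub>R u) - f (a + t *\<^sub>R v) + f a) / t\<^sup>2)
          \<longlongrightarrow> L v \<bullet> u) (at_right 0)"
proof -
  define \<Delta> where "\<Delta> t = f (a + t *\<^sub>R u + t *\<^sub>R v) - f (a + t *\<^sub>R u) - f (a + t *\<^sub>R v) + f a" for t
  define K where "K = norm u + norm v"
  have K: "0 \<le> K"
    by (simp add: K_def)
  obtain r where r: "0 < r" "ball a r \<subseteq> S"
    using S open_contains_ball by blast
  have "\<forall>\<^sub>F t in at_right 0. dist (\<Delta> t / t\<^sup>2) (L v \<bullet> u) < e" if "0 < e" for e
  proof -
    define \<epsilon> where "\<epsilon> = e / (2 * K\<^sup>2 + 1)"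
    have "0 < 1 + 2 * K\<^sup>2"
      using zero_le_power2[of K] by linarith
    then have \<epsilon>: "0 < \<epsilon>" "2 * \<epsilon> * K\<^sup>2 < e"
      using \<open>0 < e\<close> by (auto simp: \<epsilon>_def field_simps)
    obtain d where d: "0 < d"
      "\<forall>y. norm (y - a) < d \<longrightarrow> norm (g y - g a - L (y - a)) \<le> \<epsilon> * norm (y - a)"
      using hess \<epsilon>(1) unfolding has_derivative_at_alt by blast
    define \<rho> where "\<rho> = min r d"
    have approx: "\<forall>y\<in>ball a \<rho>. norm (g y - g a - L (y - a)) \<le> \<epsilon> * norm (y - a)"
      using d by (simp add: \<rho>_def dist_norm norm_minus_commute)
    have ball: "ball a \<rho> \<subseteq> S"
      using r by (auto simp: \<rho>_def)
    have "dist (\<Delta> t / t\<^sup>2) (L v \<bullet> u) < e" if t: "0 < t" "t < \<rho> / (K + 1)" for t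
    proof -
      have "t * K + t < \<rho>"
        using t K by (simp add: pos_less_divide_eq distrib_left)
      then have "\<bar>\<Delta> t - t\<^sup>2 * (L v \<bullet> u)\<bar> \<le> 2 * \<epsilon> * K\<^sup>2 * t\<^sup>2"
        using second_difference_bound[OF grad ball has_derivative_linear[OF hess] approx] t \<epsilon>(1)
        by (simp add: \<Delta>_def K_def)
      then have "\<bar>\<Delta> t - t\<^sup>2 * (L v \<bullet> u)\<bar> / t\<^sup>2 \<le> 2 * \<epsilon> * K\<^sup>2"
        using t by (simp add: pos_divide_le_eq)
      moreover have "\<Delta> t / t\<^sup>2 - L v \<bullet> u = (\<Delta> t - t\<^sup>2 * (L v \<bullet> u)) / t\<^sup>2"
        using t by (simp add: field_simps)
      then have "dist (\<Delta> t / t\<^sup>2) (L v \<bullet> u) = \<bar>\<Delta> t - t\<^sup>2 * (L v \<bullet> u)\<bar> / t\<^sup>2"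
        by (simp add: dist_real_def)
      ultimately show ?thesis
        using \<epsilon>(2) by linarith
    qed
    moreover have "0 < \<rho> / (K + 1)"
      using r d K by (simp add: \<rho>_def)
    ultimately show ?thesis
      unfolding eventually_at_right_field by auto
  qed
  then show ?thesis
    unfolding tendsto_iff \<Delta>_def by blast
qed

lemma derivative_of_gradient_symmetric:
  fixes f :: "'a::real_inner \<Rightarrow> real" and g :: "'a \<Rightarrow> 'a"
  assumes "open S" "a \<in> S"
    and "\<forall>y\<in>S. (f has_derivative (\<lambda>h. g y \<bullet> h)) (at y)"
    and "(g has_derivative L) (at a)"
  shows "L v \<bullet> u = L u \<bullet> v"
proof (rule tendsto_unique)
  show "((\<lambda>t. (f (a + t *\<^sub>R u + t *\<^sub>R v) - f (a + t *\<^sub>R u) - f (a + t *\<^sub>R v) + f a) / t\<^sup>2)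
          \<longlongrightarrow> L v \<bullet> u) (at_right 0)"
    using second_difference_tendsto[OF assms] .
  show "((\<lambda>t. (f (a + t *\<^sub>R u + t *\<^sub>R v) - f (a + t *\<^sub>R u) - f (a + t *\<^sub>R v) + f a) / t\<^sup>2)
          \<longlongrightarrow> L u \<bullet> v) (at_right 0)"
    using second_difference_tendsto[OF assms, of v u] by (simp add: algebra_simps)
qed simp

lemma has_hessian_symmetric:
  assumes "has_hessian f H a"
  shows "x \<bullet> (H *v y) = y \<bullet> (H *v x)"
proof -
  obtain g S where "open S" "a \<in> S" "\<forall>y\<in>S. (f has_derivative (\<lambda>h. g y \<bullet> h)) (at y)"
    "(g has_derivative (\<lambda>h. H *v h)) (at a)"
    using assms unfolding has_hessian_def by blast
  from derivative_of_gradient_symmetric[OF this, of y x] show ?thesis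
    by (simp add: inner_commute)
qed

lemma has_hessian_unique:
  assumes "has_hessian f H a" "has_hessian f H' a"
  shows "H = H'"
proof -
  obtain g S where S: "open S" "a \<in> S" "\<forall>y\<in>S. (f has_derivative (\<lambda>h. g y \<bullet> h)) (at y)"
    and g: "(g has_derivative (\<lambda>h. H *v h)) (at a)"
    using assms(1) unfolding has_hessian_def by blast
  obtain g' S' where S': "open S'" "a \<in> S'" "\<forall>y\<in>S'. (f has_derivative (\<lambda>h. g' y \<bullet> h)) (at y)"
    and g': "(g' has_derivative (\<lambda>h. H' *v h)) (at a)"
    using assms(2) unfolding has_hessian_def by blast
  have same_gradient: "g' y = g y" if "y \<in> S \<inter> S'" for y
    using has_derivative_unique[of f "\<lambda>h. g y \<bullet> h" y "\<lambda>h. g' y \<bullet> h"] S S' that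
    by (metis IntD1 IntD2 vector_eq_ldot inner_commute)
  have "(g has_derivative (\<lambda>h. H' *v h)) (at a)"
    by (rule has_derivative_transform_within_open[OF g', of "S \<inter> S'"]) (use S S' same_gradient in auto)
  then have "(\<lambda>h. H *v h) = (\<lambda>h. H' *v h)"
    using g has_derivative_unique by blast
  then show ?thesis
    by (simp add: matrix_eq fun_eq_iff)
qed

lemma has_hessian_add_sq_dist:
  assumes "has_hessian f H a"
  shows "has_hessian (\<lambda>x. f x + c * (norm (x - x\<^sub>0))\<^sup>2) (H + (2 * c) *\<^sub>R mat 1) a"
proof -
  obtain g S where S: "open S" "a \<in> S" and grad: "\<forall>y\<in>S. (f has_derivative (\<lambda>h. g y \<bullet> h)) (at y)"
    and g: "(g has_derivative (\<lambda>h. H *v h)) (at a)"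
    using assms unfolding has_hessian_def by blast
  define g' where "g' y = g y + (2 * c) *\<^sub>R (y - x\<^sub>0)" for y
  have "((\<lambda>x. f x + c * (norm (x - x\<^sub>0))\<^sup>2) has_derivative (\<lambda>h. g' y \<bullet> h)) (at y)" if "y \<in> S" for y
  proof -
    have "((\<lambda>x. f x + c * ((x - x\<^sub>0) \<bullet> (x - x\<^sub>0))) has_derivative
        (\<lambda>h. g y \<bullet> h + c * ((y - x\<^sub>0) \<bullet> h + h \<bullet> (y - x\<^sub>0)))) (at y)"
      using grad that by (auto intro!: derivative_eq_intros)
    then show ?thesis
      by (simp add: g'_def power2_norm_eq_inner inner_add_left inner_commute algebra_simps)
  qed
  moreover have "(g' has_derivative (\<lambda>h. (H + (2 * c) *\<^sub>R mat 1) *v h)) (at a)"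
    using g unfolding g'_def
    by (auto intro!: derivative_eq_intros simp: matrix_vector_mult_add_rdistrib scaleR_matrix_vector_assoc[symmetric])
  ultimately show ?thesis
    using S unfolding has_hessian_def by blast
qed

section \<open>Quadratic forms of diagonalizable symmetric matrices\<close>

lemma eigenvectors_orthogonal:
  fixes T :: "'a::real_inner \<Rightarrow> 'a"
  assumes sym: "\<And>x y. x \<bullet> T y = y \<bullet> T x"
    and "T x = \<alpha> *\<^sub>R x" "T y = \<beta> *\<^sub>R y" "\<alpha> \<noteq> \<beta>"
  shows "x \<bullet> y = 0"
proof -
  have "\<alpha> * (x \<bullet> y) = \<beta> * (x \<bullet> y)"
    using sym[of y x] assms(2,3) by (simp add: inner_commute)
  then show ?thesis
    using \<open>\<alpha> \<noteq> \<beta>\<close> by simp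
qed

lemma quadratic_form_ge_on_eigenbasis:
  fixes T :: "'a::real_inner \<Rightarrow> 'a" and c :: "'i \<Rightarrow> 'a"
  assumes "finite I" and T: "linear T" and sym: "\<And>x y. x \<bullet> T y = y \<bullet> T x"
    and eig: "\<And>i. i \<in> I \<Longrightarrow> T (c i) = \<mu> i *\<^sub>R c i"
    and lower: "\<And>i. i \<in> I \<Longrightarrow> m \<le> \<mu> i"
    and w: "w = (\<Sum>i\<in>I. x i *\<^sub>R c i)"
  shows "m * (w \<bullet> w) \<le> w \<bullet> T w"
proof -
  define y where "y i = sqrt (\<mu> i - m) * x i" for i
  \<comment> \<open>Eigenvectors of distinct eigenvalues are orthogonal, so only pairs with
     \<open>\<mu> i = \<mu> j\<close> contribute, and for those \<open>\<mu> j - m = sqrt (\<mu> i - m) * sqrt (\<mu> j - m)\<close>.\<close>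
  have pair: "x i * x j * (\<mu> j - m) * (c i \<bullet> c j) = y i * y j * (c i \<bullet> c j)"
    if "i \<in> I" "j \<in> I" for i j
  proof (cases "\<mu> i = \<mu> j")
    case True
    then show ?thesis
      using lower[OF that(2)] by (simp add: y_def real_sqrt_mult[symmetric] algebra_simps)
  next
    case False
    then show ?thesis
      using eigenvectors_orthogonal[OF sym eig[OF that(1)] eig[OF that(2)]] by simp
  qed
  have "T w = (\<Sum>j\<in>I. (x j * \<mu> j) *\<^sub>R c j)"
    using eig by (simp add: w linear_sum[OF T] linear_scale[OF T])
  then have "w \<bullet> T w - m * (w \<bullet> w) = (\<Sum>j\<in>I. \<Sum>i\<in>I. x i * x j * (\<mu> j - m) * (c i \<bullet> c j))"
    by (simp add: w inner_sum_left inner_sum_right sum_distrib_left sum_subtractf[symmetric] algebra_simps)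
  also have "\<dots> = (\<Sum>j\<in>I. \<Sum>i\<in>I. y i * y j * (c i \<bullet> c j))"
    by (intro sum.cong refl pair)
  also have "\<dots> = (\<Sum>i\<in>I. y i *\<^sub>R c i) \<bullet> (\<Sum>j\<in>I. y j *\<^sub>R c j)"
    by (simp add: inner_sum_left inner_sum_right sum_distrib_left algebra_simps)
  finally show ?thesis
    using inner_ge_zero[of "\<Sum>i\<in>I. y i *\<^sub>R c i"] by linarith
qed

lemma matrix_inv_right: "invertible A \<Longrightarrow> A ** matrix_inv A = mat 1"
  and matrix_inv_left: "invertible A \<Longrightarrow> matrix_inv A ** A = mat 1"
  unfolding invertible_def matrix_inv_def by (metis (mono_tags, lifting) someI_ex)+

lemma diag_mat_mult_axis: "diag_mat \<Lambda> *v axis i 1 = \<Lambda> $ i *\<^sub>R axis i (1::real)"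
  by (simp add: vec_eq_iff matrix_vector_mult_def diag_mat_def axis_def if_distrib[of "\<lambda>a. a * _"]
      cong: if_cong)

lemma quadratic_form_ge_Min_eigenvalue:
  fixes H U :: "real^'n^'n" and \<Lambda> :: "real^'n"
  assumes sym: "\<And>x y. x \<bullet> (H *v y) = y \<bullet> (H *v x)"
    and U: "invertible U" and H: "H = U ** diag_mat \<Lambda> ** matrix_inv U"
  shows "Min (range (\<lambda>i. \<Lambda> $ i)) * (v \<bullet> v) \<le> v \<bullet> (H *v v)"
proof (rule quadratic_form_ge_on_eigenbasis[where T = "(*v) H"])
  have HU: "H ** U = U ** diag_mat \<Lambda>"
    unfolding H by (metis matrix_inv_left[OF U] matrix_mul_assoc matrix_mul_rid)
  fix i
  have "H *v column i U = U *v (diag_mat \<Lambda> *v axis i 1)"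
    by (simp add: matrix_vector_mult_basis[symmetric] matrix_vector_mul_assoc HU)
  also have "\<dots> = \<Lambda> $ i *\<^sub>R column i U"
    by (simp only: diag_mat_mult_axis) (simp add: matrix_vector_mult_scaleR matrix_vector_mult_basis)
  finally show "H *v column i U = \<Lambda> $ i *\<^sub>R column i U" .
next
  have "v = U *v (matrix_inv U *v v)"
    by (simp add: matrix_vector_mul_assoc matrix_inv_right[OF U])
  then show "v = (\<Sum>i\<in>UNIV. (matrix_inv U *v v) $ i *\<^sub>R column i U)"
    by (metis matrix_mult_sum scalar_mult_eq_scaleR)
qed (simp_all add: sym matrix_vector_mul_linear)

section \<open>Leave-one-out stability\<close>

lemma card_mult_emp_loss:
  assumes "finite A"
  shows "real (card A) * emp_loss loss D A \<theta> = (\<Sum>i\<in>A. loss \<theta> (D i))"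
  using assms by (cases "A = {}") (simp_all add: emp_loss_def)

lemma emp_reg_loss_remove:
  assumes "finite I" "j \<in> I"
  shows "real (card I) * emp_reg_loss loss lam \<gamma> \<theta>\<^sub>0 D I \<theta>
    = (real (card I) - 1) * emp_reg_loss loss lam \<gamma> \<theta>\<^sub>0 D (I - {j}) \<theta> + reg_loss loss lam \<gamma> \<theta>\<^sub>0 \<theta> (D j)"
proof -
  have "1 \<le> card I"
    using assms by (auto simp: Suc_le_eq card_gt_0_iff)
  then have card: "real (card (I - {j})) = real (card I) - 1"
    using assms by (simp add: of_nat_diff)
  have "real (card I) * emp_loss loss D I \<theta> = loss \<theta> (D j) + (\<Sum>i\<in>I - {j}. loss \<theta> (D i))"
    using assms by (simp add: card_mult_emp_loss sum.remove)
  moreover have "(real (card I) - 1) * emp_loss loss D (I - {j}) \<theta> = (\<Sum>i\<in>I - {j}. loss \<theta> (D i))"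
    using assms card card_mult_emp_loss[of "I - {j}"] by (metis finite_Diff)
  ultimately show ?thesis
    unfolding emp_reg_loss_def reg_loss_def by (simp add: algebra_simps)
qed

lemma leave_one_out_excess_le:
  assumes "finite I" "j \<in> I"
    and min: "emp_reg_loss loss lam \<gamma> \<theta>\<^sub>0 D (I - {j}) \<theta>' \<le> emp_reg_loss loss lam \<gamma> \<theta>\<^sub>0 D (I - {j}) \<theta>"
  shows "real (card I) * (emp_reg_loss loss lam \<gamma> \<theta>\<^sub>0 D I \<theta>' - emp_reg_loss loss lam \<gamma> \<theta>\<^sub>0 D I \<theta>)
    \<le> reg_loss loss lam \<gamma> \<theta>\<^sub>0 \<theta>' (D j) - reg_loss loss lam \<gamma> \<theta>\<^sub>0 \<theta> (D j)"
proof -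
  have "1 \<le> real (card I)"
    using assms(1,2) by (auto simp: Suc_le_eq card_gt_0_iff)
  then have "(real (card I) - 1) * (emp_reg_loss loss lam \<gamma> \<theta>\<^sub>0 D (I - {j}) \<theta>'
      - emp_reg_loss loss lam \<gamma> \<theta>\<^sub>0 D (I - {j}) \<theta>) \<le> 0"
    using min by (simp add: mult_nonneg_nonpos)
  then show ?thesis
    using emp_reg_loss_remove[OF assms(1,2), of loss lam \<gamma> \<theta>\<^sub>0 D \<theta>]
      emp_reg_loss_remove[OF assms(1,2), of loss lam \<gamma> \<theta>\<^sub>0 D \<theta>']
    by (simp add: algebra_simps)
qed

lemma quadratic_growth_bound:
  fixes \<delta> \<eta> \<mu> N :: real
  assumes growth: "N * (\<mu> / 2 * \<delta>\<^sup>2) \<le> \<eta> * \<delta>"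
    and "0 \<le> \<delta>" "0 \<le> \<eta>" "0 < \<mu>" "0 < N"
  shows "\<eta> * \<delta> \<le> 2 * \<eta>\<^sup>2 / (\<mu> * N)"
proof (cases "\<delta> = 0")
  case True
  then show ?thesis
    using assms by simp
next
  case False
  then have "N * \<mu> * \<delta> \<le> 2 * \<eta>"
    using growth \<open>0 \<le> \<delta>\<close> by (simp add: power2_eq_square algebra_simps)
  then have "\<delta> \<le> 2 * \<eta> / (\<mu> * N)"
    using assms by (simp add: pos_le_divide_eq mult_ac)
  then have "\<eta> * \<delta> \<le> \<eta> * (2 * \<eta> / (\<mu> * N))"
    using \<open>0 \<le> \<eta>\<close> by (rule mult_left_mono)
  then show ?thesis
    by (simp add: power2_eq_square mult_ac)
qed

lemma ennreal_abs_le_of_quadratic_growth: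
  fixes X \<delta> \<eta> \<mu> N :: real
  assumes lip: "\<bar>X\<bar> \<le> \<eta> * \<delta>" and growth: "N * (\<mu> / 2 * \<delta>\<^sup>2) \<le> \<eta> * \<delta>"
    and "0 \<le> \<delta>" "0 \<le> \<eta>" "0 < N"
  shows "ennreal \<bar>X\<bar> \<le> ennreal (2 * \<eta>\<^sup>2) / ennreal (\<mu> * N)"
proof (cases "0 < \<mu>")
  case True
  then have "\<bar>X\<bar> \<le> 2 * \<eta>\<^sup>2 / (\<mu> * N)"
    using lip quadratic_growth_bound[OF growth] assms by fastforce
  then show ?thesis
    using True \<open>0 < N\<close> by (simp add: divide_ennreal ennreal_leI)
next
  case False
  \<comment> \<open>The denominator is \<open>ennreal 0\<close>, and \<open>x / 0 = top\<close> unless \<open>x = 0\<close>.\<close>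
  then have "ennreal (\<mu> * N) = 0"
    using \<open>0 < N\<close> by (simp add: ennreal_eq_0_iff mult_nonpos_nonneg)
  moreover have "\<eta> = 0 \<Longrightarrow> X = 0"
    using lip by simp
  ultimately show ?thesis
    by (cases "\<eta> = 0") (simp_all add: ennreal_divide_zero)
qed

lemma nn_integral_pmf_of_set_le:
  assumes "finite A" "A \<noteq> {}" "\<And>x. x \<in> A \<Longrightarrow> f x \<le> c"
  shows "(\<integral>\<^sup>+ x. f x \<partial>measure_pmf (pmf_of_set A)) \<le> c"
proof -
  have "(\<integral>\<^sup>+ x. f x \<partial>measure_pmf (pmf_of_set A)) \<le> (\<integral>\<^sup>+ x. c \<partial>measure_pmf (pmf_of_set A))"
    using assms by (intro nn_integral_mono_AE) (auto simp: AE_measure_pmf_iff)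
  then show ?thesis
    by (simp add: measure_pmf.emeasure_space_1)
qed

lemma leave_one_out_stability:
  fixes loss :: "real^'m \<Rightarrow> 'x \<Rightarrow> real" and H Hreg U :: "real^'m^'m"
  assumes I: "finite I" "j \<in> I"
    and lip: "lipschitz_on \<eta> UNIV (\<lambda>\<theta>. reg_loss loss lam \<gamma> \<theta>\<^sub>0 \<theta> (D j))"
    and min: "\<And>\<theta>. emp_reg_loss loss lam \<gamma> \<theta>\<^sub>0 D (I - {j}) \<theta>\<^sub>j \<le> emp_reg_loss loss lam \<gamma> \<theta>\<^sub>0 D (I - {j}) \<theta>"
    and hess_reg: "has_hessian (emp_reg_loss loss lam \<gamma> \<theta>\<^sub>0 D I) Hreg \<theta>\<^sub>I"
    and taylor: "emp_reg_loss loss lam \<gamma> \<theta>\<^sub>0 D I \<theta>\<^sub>j = emp_reg_loss loss lam \<gamma> \<theta>\<^sub>0 D I \<theta>\<^sub>I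
      + 1/2 * ((\<theta>\<^sub>j - \<theta>\<^sub>I) \<bullet> (Hreg *v (\<theta>\<^sub>j - \<theta>\<^sub>I)))"
    and hess: "has_hessian (emp_loss loss D I) H \<theta>\<^sub>I"
    and U: "invertible U" and eig: "H = U ** diag_mat \<Lambda> ** matrix_inv U"
  shows "ennreal \<bar>reg_loss loss lam \<gamma> \<theta>\<^sub>0 \<theta>\<^sub>j (D j) - reg_loss loss lam \<gamma> \<theta>\<^sub>0 \<theta>\<^sub>I (D j)\<bar>
    \<le> ennreal (2 * \<eta>\<^sup>2) / ennreal ((Min (range (\<lambda>i. \<Lambda> $ i)) + 2 * lam * dropout_coef \<gamma>) * real (card I))"
proof -
  define c where "c = lam * dropout_coef \<gamma>"
  define d where "d = \<theta>\<^sub>j - \<theta>\<^sub>I"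
  define \<mu> where "\<mu> = Min (range (\<lambda>i. \<Lambda> $ i)) + 2 * c"
  define F where "F = emp_reg_loss loss lam \<gamma> \<theta>\<^sub>0 D I"
  define r where "r \<theta> = reg_loss loss lam \<gamma> \<theta>\<^sub>0 \<theta> (D j)" for \<theta>
  have "F = (\<lambda>\<theta>. emp_loss loss D I \<theta> + c * (norm (\<theta> - \<theta>\<^sub>0))\<^sup>2)"
    by (simp add: fun_eq_iff F_def c_def emp_reg_loss_def)
  then have "has_hessian F (H + (2 * c) *\<^sub>R mat 1) \<theta>\<^sub>I"
    using has_hessian_add_sq_dist[OF hess] by simp
  then have "Hreg = H + (2 * c) *\<^sub>R mat 1"
    using has_hessian_unique hess_reg unfolding F_def by blast
  then have "d \<bullet> (Hreg *v d) = d \<bullet> (H *v d) + 2 * c * (d \<bullet> d)"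
    by (simp add: matrix_vector_mult_add_rdistrib scaleR_matrix_vector_assoc[symmetric] inner_add_right)
  moreover have "Min (range (\<lambda>i. \<Lambda> $ i)) * (d \<bullet> d) \<le> d \<bullet> (H *v d)"
    using quadratic_form_ge_Min_eigenvalue[OF has_hessian_symmetric[OF hess] U eig] .
  ultimately have curvature: "\<mu> * (norm d)\<^sup>2 \<le> d \<bullet> (Hreg *v d)"
    by (simp add: \<mu>_def power2_norm_eq_inner algebra_simps)
  have change: "\<bar>r \<theta>\<^sub>j - r \<theta>\<^sub>I\<bar> \<le> \<eta> * norm d"
    using lipschitz_onD[OF lip, of \<theta>\<^sub>j \<theta>\<^sub>I] by (simp add: r_def d_def dist_real_def dist_norm)
  have "real (card I) * (\<mu> / 2 * (norm d)\<^sup>2) \<le> real (card I) * (F \<theta>\<^sub>j - F \<theta>\<^sub>I)"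
    using curvature taylor by (intro mult_left_mono) (simp_all add: F_def d_def)
  also have "\<dots> \<le> r \<theta>\<^sub>j - r \<theta>\<^sub>I"
    using leave_one_out_excess_le[OF I] min unfolding F_def r_def by blast
  also have "\<dots> \<le> \<eta> * norm d"
    using change by linarith
  finally have growth: "real (card I) * (\<mu> / 2 * (norm d)\<^sup>2) \<le> \<eta> * norm d" .
  have "0 < card I"
    using I by (auto simp: card_gt_0_iff)
  then show ?thesis
    using ennreal_abs_le_of_quadratic_growth[OF change growth] lipschitz_on_nonneg[OF lip]
    by (simp add: r_def \<mu>_def c_def mult.assoc)
qed

theorem theorem1:
  fixes M :: "'x measure"
    and loss :: "real^'m \<Rightarrow> 'x \<Rightarrow> real"
    and \<theta>0 :: "real^'m"
    and \<gamma> lam \<eta> :: real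
    and n :: nat
    and thetahat :: "(nat \<Rightarrow> 'x) \<Rightarrow> nat set \<Rightarrow> real^'m"
    and Hreg Hk U :: "(nat \<Rightarrow> 'x) \<Rightarrow> real^'m^'m"
    and \<Lambda> :: "(nat \<Rightarrow> 'x) \<Rightarrow> real^'m"
  assumes M: "prob_space M"
    and gamma: "0 \<le> \<gamma>" "\<gamma> < 1"
    and lam: "lam > 0"
    and n: "n \<ge> 1"
    and lip: "\<forall>x. lipschitz_on \<eta> UNIV (\<lambda>\<theta>. reg_loss loss lam \<gamma> \<theta>0 \<theta> x)"
    and minD: "\<forall>D \<in> space (PiM {..<n} (\<lambda>_. M)). \<forall>\<theta>.
        emp_reg_loss loss lam \<gamma> \<theta>0 D {..<n} (thetahat D {..<n})
          \<le> emp_reg_loss loss lam \<gamma> \<theta>0 D {..<n} \<theta>"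
    and minDj: "\<forall>D \<in> space (PiM {..<n} (\<lambda>_. M)). \<forall>j<n. \<forall>\<theta>.
        emp_reg_loss loss lam \<gamma> \<theta>0 D ({..<n} - {j}) (thetahat D ({..<n} - {j}))
          \<le> emp_reg_loss loss lam \<gamma> \<theta>0 D ({..<n} - {j}) \<theta>"
    and hess_reg: "\<forall>D \<in> space (PiM {..<n} (\<lambda>_. M)).
        has_hessian (emp_reg_loss loss lam \<gamma> \<theta>0 D {..<n}) (Hreg D) (thetahat D {..<n})"
    and taylor: "\<forall>D \<in> space (PiM {..<n} (\<lambda>_. M)). \<forall>j<n.
        emp_reg_loss loss lam \<gamma> \<theta>0 D {..<n} (thetahat D ({..<n} - {j}))
          = emp_reg_loss loss lam \<gamma> \<theta>0 D {..<n} (thetahat D {..<n})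
            + (1/2) * ((thetahat D ({..<n} - {j}) - thetahat D {..<n})
                       \<bullet> (Hreg D *v (thetahat D ({..<n} - {j}) - thetahat D {..<n})))"
    and psd: "\<forall>D \<in> space (PiM {..<n} (\<lambda>_. M)). \<forall>v. 0 \<le> v \<bullet> (Hreg D *v v)"
    and hess_k: "\<forall>D \<in> space (PiM {..<n} (\<lambda>_. M)).
        has_hessian (emp_loss loss D {..<n}) (Hk D) (thetahat D {..<n})"
    and eig: "\<forall>D \<in> space (PiM {..<n} (\<lambda>_. M)).
        invertible (U D) \<and> Hk D = U D ** diag_mat (\<Lambda> D) ** matrix_inv (U D)"
  shows "(\<integral>\<^sup>+ D. (\<integral>\<^sup>+ j. ennreal \<bar>reg_loss loss lam \<gamma> \<theta>0 (thetahat D ({..<n} - {j})) (D j)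
                                 - reg_loss loss lam \<gamma> \<theta>0 (thetahat D {..<n}) (D j)\<bar>
                \<partial>measure_pmf (pmf_of_set {..<n})) \<partial>PiM {..<n} (\<lambda>_. M))
         \<le> (\<integral>\<^sup>+ D. ennreal (2 * \<eta>^2)
                  / ennreal ((Min (range (\<lambda>i. \<Lambda> D $ i)) + 2 * lam * dropout_coef \<gamma>) * real n)
              \<partial>PiM {..<n} (\<lambda>_. M))"
proof (intro nn_integral_mono nn_integral_pmf_of_set_le)
  fix D j
  assume D: "D \<in> space (PiM {..<n} (\<lambda>_. M))" and j: "j \<in> {..<n}"
  then have "j < n" "invertible (U D)" "Hk D = U D ** diag_mat (\<Lambda> D) ** matrix_inv (U D)"
    using eig by auto
  from leave_one_out_stability[OF finite_lessThan j lip[rule_format] minDj[rule_format, OF D \<open>j < n\<close>]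
      hess_reg[rule_format, OF D] taylor[rule_format, OF D \<open>j < n\<close>] hess_k[rule_format, OF D]
      \<open>invertible (U D)\<close> \<open>Hk D = _\<close>]
  show "ennreal \<bar>reg_loss loss lam \<gamma> \<theta>0 (thetahat D ({..<n} - {j})) (D j)
      - reg_loss loss lam \<gamma> \<theta>0 (thetahat D {..<n}) (D j)\<bar>
    \<le> ennreal (2 * \<eta>\<^sup>2) / ennreal ((Min (range (\<lambda>i. \<Lambda> D $ i)) + 2 * lam * dropout_coef \<gamma>) * real n)"
    by simp
qed (use n in \<open>auto simp: lessThan_empty_iff\<close>)

end
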